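(* Let $G=(V,(c_{xy})_{x,y\in V})$ be a connected weighted finite graph and $\alpha=(\alpha_x)_{x\in V}$ positive site-weights. Then $$(1\wedge \alpha_{\min})\,\mathrm{gap}_{\rm RW}(G,\alpha)\le \mathrm{gap}_{\rm SIP}(G,\alpha)\le \mathrm{gap}_{\rm RW}(G,\alpha),$$ where $\alpha_{\min}:=\min_{x\in V}\alpha_x$.
   Context: $G=(V,(c_{xy}))$ is a finite graph with $|V|=n$ and symmetric non-negative edge weights $c_{xy}=c_{yx}\ge 0$, connected (the graph of pairs with $c_{xy}>0$ is connected). For $k\in\mathbb N$, $\Xi_k:=\{\eta\in\mathbb N_0^V:\sum_x\eta_x=k\}$. For $\eta$ with $\eta_x\ge1$, $\eta-\delta_x+\delta_y$ is the configuration obtained by moving one particle from $x$ to $y$. The symmetric inclusion process ${\rm SIP}_k(G,\alpha)$ is the continuous-time Markov chain on $\Xi_k$ with generator $L_kf(\eta)=\sum_{x\in V}\eta_x\sum_{y\in V}c_{xy}(\alpha_y+\eta_y)(f(\eta-\delta_x+\delta_y)-f(\eta))$. It is reversible with respect to $\mu_{\alpha,k}(\eta)=Z_{\alpha,k}^{-1}\prod_{x}\frac{\Gamma(\alpha_x+\eta_x)}{\Gamma(\alpha_x)\eta_x!}$ (normalized), and $\mathrm{gap}_k(G,\alpha)$ denotes the second smallest eigenvalue of $-L_k$ (smallest nonzero one). The random walk ${\rm RW}(G,\alpha)$ is the Markov chain on $V$ with generator $A_\alpha f(x)=\sum_{y}c_{xy}\alpha_y(f(y)-f(x))$; note $\mathrm{gap}_1(G,\alpha)$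 equals its spectral gap. Define $\mathrm{gap}_{\rm RW}(G,\alpha):=\mathrm{gap}_1(G,\alpha)$ and $\mathrm{gap}_{\rm SIP}(G,\alpha):=\inf_{k\ge2}\mathrm{gap}_k(G,\alpha)$. *)

theory Defs
  imports Complex_Main
begin

text \<open>Vertex set V is the finite type 'v. Edge weights c, site weights alpha.
  Configurations are functions eta :: 'v => nat.\<close>

definition Xi :: "nat \<Rightarrow> ('v::finite \<Rightarrow> nat) set" where
  "Xi k = {eta. (\<Sum>x\<in>UNIV. eta x) = k}"

text \<open>eta - delta_x + delta_y (meaningful when eta x >= 1).\<close>
definition move :: "('v \<Rightarrow> nat) \<Rightarrow> 'v \<Rightarrow> 'v \<Rightarrow> ('v \<Rightarrow> nat)" where
  "move eta x y = (let eta' = eta(x := eta x - 1) in eta'(y := eta' y + 1))"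

text \<open>Generator L_k of SIP (its action does not depend on k).\<close>
definition sip_gen :: "('v::finite \<Rightarrow> 'v \<Rightarrow> real) \<Rightarrow> ('v \<Rightarrow> real)
    \<Rightarrow> (('v \<Rightarrow> nat) \<Rightarrow> real) \<Rightarrow> ('v \<Rightarrow> nat) \<Rightarrow> real" where
  "sip_gen c alpha f eta =
     (\<Sum>x\<in>UNIV. real (eta x) * (\<Sum>y\<in>UNIV. c x y * (alpha y + real (eta y))
         * (f (move eta x y) - f eta)))"

definition sip_eigenvalue :: "('v::finite \<Rightarrow> 'v \<Rightarrow> real) \<Rightarrow> ('v \<Rightarrow> real) \<Rightarrow> nat \<Rightarrow> real \<Rightarrow> bool" where
  "sip_eigenvalue c alpha k lam \<longleftrightarrow>
     (\<exists>f. (\<exists>eta\<in>Xi k. f eta \<noteq> 0) \<and>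
          (\<forall>eta\<in>Xi k. - sip_gen c alpha f eta = lam * f eta))"

text \<open>gap_k: smallest nonzero eigenvalue of -L_k (eigenvalues are real and
  nonnegative by reversibility).\<close>
definition gap :: "('v::finite \<Rightarrow> 'v \<Rightarrow> real) \<Rightarrow> ('v \<Rightarrow> real) \<Rightarrow> nat \<Rightarrow> real" where
  "gap c alpha k = Inf {lam. lam \<noteq> 0 \<and> sip_eigenvalue c alpha k lam}"

definition gap_RW :: "('v::finite \<Rightarrow> 'v \<Rightarrow> real) \<Rightarrow> ('v \<Rightarrow> real) \<Rightarrow> real" where
  "gap_RW c alpha = gap c alpha 1"

definition gap_SIP :: "('v::finite \<Rightarrow> 'v \<Rightarrow> real) \<Rightarrow> ('v \<Rightarrow> real) \<Rightarrow> real" where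
  "gap_SIP c alpha = (INF k\<in>{k. k \<ge> 2}. gap c alpha k)"

definition connected_weights :: "('v \<Rightarrow> 'v \<Rightarrow> real) \<Rightarrow> bool" where
  "connected_weights c \<longleftrightarrow> (\<forall>x y. (\<lambda>a b. c a b > 0)\<^sup>*\<^sup>* x y)"

end

theory Submission
  imports Defs "HOL-Analysis.Analysis"
begin

(* The lower bound is proved by induction on the number of particles. Conditioning on the
   position of one particle writes the norm and the Dirichlet form of f on Xi (k + 1) as
   sip_weight-averages, over xi in Xi k, of the random-walk norm and Dirichlet form of the
   fibre x |-> f (xi + delta x) with site weights alpha + xi. The map
   f |-> (xi |-> sum z. (alpha z + xi z) * f (xi + delta z)) intertwines the generators on
   Xi (k + 1) and Xi k, so an eigenfunction either descends to an eigenfunction with the same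
   eigenvalue on Xi k, or all its fibres are centred. In the latter case the Poincare
   inequality of the random walk, transported from the weights alpha to
   alpha + xi <= (1 + k / alpha_min) * alpha, gives lambda >= min 1 alpha_min * gap_RW.
   The Poincare inequality with constant gap_RW comes from a minimiser of the Rayleigh
   quotient, which is an eigenfunction by the Euler-Lagrange equation.
   For the upper bound, the additive functions eta |-> sum x. eta x * g x lift every
   eigenfunction g of the random walk to every level k >= 1. *)

section \<open>Configurations\<close>

definition add_particle :: "('v \<Rightarrow> nat) \<Rightarrow> 'v \<Rightarrow> ('v \<Rightarrow> nat)" where
  "add_particle xi z = xi(z := Suc (xi z))"

lemma add_particle_apply: "add_particle xi z x = xi x + (if x = z then 1 else 0)"
  by (simp add: add_particle_def)

lemma Xi_le: "eta \<in> Xi k \<Longrightarrow> eta x \<le> k"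
  using member_le_sum[of x UNIV eta] by (simp add: Xi_def)

lemma finite_Xi: "finite (Xi k :: ('v::finite \<Rightarrow> nat) set)"
proof (rule finite_subset)
  show "Xi k \<subseteq> PiE (UNIV::'v set) (\<lambda>_. {..k})"
    by (auto simp: PiE_UNIV_domain Xi_le)
qed (simp add: finite_PiE)

lemma sum_add_particle:
  "(\<Sum>x\<in>(UNIV::'v::finite set). add_particle xi z x) = (\<Sum>x\<in>UNIV. xi x) + 1"
  by (simp add: add_particle_apply sum.distrib)

lemma add_particle_in_Xi: "xi \<in> Xi k \<Longrightarrow> add_particle xi z \<in> Xi (Suc k)"
  by (simp add: Xi_def sum_add_particle)

lemma add_particle_remove: "eta z \<noteq> 0 \<Longrightarrow> add_particle (eta(z := eta z - 1)) z = eta"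
  by (auto simp: add_particle_def fun_eq_iff)

lemma move_add_particle: "move (add_particle xi x) x y = add_particle xi y"
  by (auto simp: move_def add_particle_def fun_eq_iff Let_def)

lemma move_apply:
  "x \<noteq> y \<Longrightarrow> move eta x y z = (if z = x then eta x - 1 else if z = y then eta y + 1 else eta z)"
  by (simp add: move_def Let_def)

lemma add_particle_move: "eta x \<noteq> 0 \<Longrightarrow> add_particle (move eta x y) x = add_particle eta y"
  by (auto simp: move_def Let_def add_particle_def fun_eq_iff)

lemma move_add_particle_other:
  "z \<noteq> x \<Longrightarrow> move (add_particle eta z) x y = add_particle (move eta x y) z"
  by (auto simp: move_def Let_def add_particle_def fun_eq_iff)

lemma bij_betw_add_particle:
  fixes x :: "'v::finite"
  shows "bij_betw (\<lambda>xi. add_particle xi x) (Xi k) {eta \<in> Xi (Suc k). eta x \<noteq> 0}"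
proof (rule bij_betw_byWitness[where f' = "\<lambda>eta. eta(x := eta x - 1)"])
  show "(\<lambda>eta. eta(x := eta x - 1)) ` {eta \<in> Xi (Suc k). eta x \<noteq> 0} \<subseteq> Xi k"
  proof (rule image_subsetI)
    fix eta :: "'v \<Rightarrow> nat"
    assume "eta \<in> {eta \<in> Xi (Suc k). eta x \<noteq> 0}"
    then have "add_particle (eta(x := eta x - 1)) x \<in> Xi (Suc k)"
      using add_particle_remove[of eta x] by simp
    then show "eta(x := eta x - 1) \<in> Xi k"
      by (simp only: Xi_def mem_Collect_eq sum_add_particle)
  qed
qed (auto simp: add_particle_in_Xi add_particle_remove, auto simp: add_particle_def)

lemma sum_Xi_Suc_occupation:
  fixes H :: "('v::finite \<Rightarrow> nat) \<Rightarrow> real"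
  shows "(\<Sum>eta\<in>Xi (Suc k). real (eta x) * H eta)
       = (\<Sum>xi\<in>Xi k. real (Suc (xi x)) * H (add_particle xi x))"
proof -
  have "(\<Sum>eta\<in>Xi (Suc k). real (eta x) * H eta)
      = (\<Sum>eta\<in>{eta \<in> Xi (Suc k). eta x \<noteq> 0}. real (eta x) * H eta)"
    by (rule sum.mono_neutral_right) (auto simp: finite_Xi)
  also have "\<dots> = (\<Sum>xi\<in>Xi k. real (add_particle xi x x) * H (add_particle xi x))"
    by (rule sum.reindex_bij_betw[OF bij_betw_add_particle, symmetric])
  finally show ?thesis
    by (simp add: add_particle_def)
qed

(* The unnormalised reversible measure: pochhammer a n = Gamma (a + n) / Gamma a. *)
definition sip_weight :: "('v::finite \<Rightarrow> real) \<Rightarrow> ('v \<Rightarrow> nat) \<Rightarrow> real" where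
  "sip_weight alpha eta = (\<Prod>x\<in>UNIV. pochhammer (alpha x) (eta x) / fact (eta x))"

lemma sip_weight_pos: "(\<And>x. alpha x > 0) \<Longrightarrow> sip_weight alpha eta > 0"
  unfolding sip_weight_def by (intro prod_pos divide_pos_pos pochhammer_pos) auto

lemma sip_weight_add_particle:
  "sip_weight alpha (add_particle xi z) * real (Suc (xi z))
     = sip_weight alpha xi * (alpha z + real (xi z))"
proof -
  let ?P = "\<lambda>eta x. pochhammer (alpha x) (eta x) / fact (eta x)"
  let ?R = "\<Prod>x\<in>UNIV-{z}. ?P xi x"
  have split: "sip_weight alpha eta = ?P eta z * (\<Prod>x\<in>UNIV-{z}. ?P eta x)" for eta
    unfolding sip_weight_def by (simp add: prod.remove[of UNIV z])
  have rest: "(\<Prod>x\<in>UNIV-{z}. ?P (add_particle xi z) x) = ?R"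
    by (rule prod.cong) (auto simp: add_particle_def)
  have cancel: "X / (d * F) * d = X / F" if "d \<noteq> 0" for X d F :: real
    using that by simp
  have "?P (add_particle xi z) z * real (Suc (xi z))
      = pochhammer (alpha z) (xi z) * (alpha z + real (xi z)) / (real (Suc (xi z)) * fact (xi z))
        * real (Suc (xi z))"
    by (simp only: add_particle_def fun_upd_same pochhammer_Suc fact_Suc of_nat_mult)
  also have "\<dots> = ?P xi z * (alpha z + real (xi z))"
    unfolding cancel[OF of_nat_neq_0] by (simp only: times_divide_eq_left)
  finally have site: "?P (add_particle xi z) z * real (Suc (xi z)) = ?P xi z * (alpha z + real (xi z))" .
  have "sip_weight alpha (add_particle xi z) * real (Suc (xi z))
      = (?P (add_particle xi z) z * real (Suc (xi z))) * ?R"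
    unfolding split[of "add_particle xi z"] rest by (simp only: ac_simps)
  also have "\<dots> = sip_weight alpha xi * (alpha z + real (xi z))"
    unfolding site split[of xi] by (simp only: ac_simps)
  finally show ?thesis .
qed

section \<open>Dirichlet forms of the random walk\<close>

definition rw_gen :: "('v::finite \<Rightarrow> 'v \<Rightarrow> real) \<Rightarrow> ('v \<Rightarrow> real) \<Rightarrow> ('v \<Rightarrow> real) \<Rightarrow> 'v \<Rightarrow> real"
  where "rw_gen c w g x = (\<Sum>y\<in>UNIV. c x y * w y * (g y - g x))"

definition dirichlet_form ::
    "('v::finite \<Rightarrow> 'v \<Rightarrow> real) \<Rightarrow> ('v \<Rightarrow> real) \<Rightarrow> ('v \<Rightarrow> real) \<Rightarrow> ('v \<Rightarrow> real) \<Rightarrow> real"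
  where "dirichlet_form c w g h =
    (1/2) * (\<Sum>x\<in>UNIV. \<Sum>y\<in>UNIV. c x y * w x * w y * (g x - g y) * (h x - h y))"

definition weighted_sqnorm :: "('v::finite \<Rightarrow> real) \<Rightarrow> ('v \<Rightarrow> real) \<Rightarrow> real"
  where "weighted_sqnorm w g = (\<Sum>x\<in>UNIV. w x * (g x)\<^sup>2)"

lemma sum_symmetric_mult_diff:
  fixes K :: "'v::finite \<Rightarrow> 'v \<Rightarrow> real"
  assumes "\<And>x y. K x y = K y x"
  shows "(\<Sum>x\<in>UNIV. \<Sum>y\<in>UNIV. K x y * (g y - g x)) = 0"
proof -
  let ?S = "\<Sum>x\<in>UNIV. \<Sum>y\<in>UNIV. K x y * (g y - g x)"
  have "?S = (\<Sum>y\<in>UNIV. \<Sum>x\<in>UNIV. K x y * (g y - g x))"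
    by (rule sum.swap)
  also have "\<dots> = - ?S"
    by (simp add: assms sum_negf[symmetric] algebra_simps)
  finally show ?thesis
    by simp
qed

lemma dirichlet_form_eq_sum_rw_gen:
  assumes sym: "\<And>x y. c x y = c y x"
  shows "dirichlet_form c w g h = - (\<Sum>x\<in>UNIV. w x * h x * rw_gen c w g x)"
proof -
  let ?T = "\<lambda>x y. c x y * w x * w y * (g x - g y)"
  have "(\<Sum>x\<in>UNIV. \<Sum>y\<in>UNIV. ?T x y * h y) = (\<Sum>y\<in>UNIV. \<Sum>x\<in>UNIV. ?T x y * h y)"
    by (rule sum.swap)
  also have "\<dots> = - (\<Sum>x\<in>UNIV. \<Sum>y\<in>UNIV. ?T x y * h x)"
    by (simp add: sym sum_negf[symmetric] algebra_simps)
  finally have "dirichlet_form c w g h = (\<Sum>x\<in>UNIV. \<Sum>y\<in>UNIV. ?T x y * h x)"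
    unfolding dirichlet_form_def right_diff_distrib sum_subtractf by simp
  also have "\<dots> = - (\<Sum>x\<in>UNIV. w x * h x * rw_gen c w g x)"
    unfolding rw_gen_def by (simp add: sum_distrib_left sum_negf[symmetric] algebra_simps)
  finally show ?thesis .
qed

lemma sum_rw_gen:
  assumes "\<And>x y. c x y = c y x"
  shows "(\<Sum>x\<in>UNIV. w x * rw_gen c w g x) = 0"
  using dirichlet_form_eq_sum_rw_gen[OF assms, where h = "\<lambda>_. 1"]
  by (simp add: dirichlet_form_def)

lemma dirichlet_form_nonneg:
  assumes "\<And>x y. c x y \<ge> 0" and "\<And>x. w x \<ge> 0"
  shows "dirichlet_form c w g g \<ge> 0"
  unfolding dirichlet_form_def mult.assoc[of _ "g _ - g _"] power2_eq_square[symmetric]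
  using assms by (intro mult_nonneg_nonneg sum_nonneg) auto

lemma weighted_sqnorm_nonneg: "(\<And>x. w x \<ge> 0) \<Longrightarrow> weighted_sqnorm w g \<ge> 0"
  unfolding weighted_sqnorm_def by (intro sum_nonneg mult_nonneg_nonneg zero_le_power2)

lemma weighted_sqnorm_eq_0_iff:
  assumes "\<And>x. w x > 0"
  shows "weighted_sqnorm w g = 0 \<longleftrightarrow> (\<forall>x. g x = 0)"
proof -
  have "weighted_sqnorm w g = 0 \<longleftrightarrow> (\<forall>x. w x * (g x)\<^sup>2 = 0)"
    unfolding weighted_sqnorm_def using assms
    by (subst sum_nonneg_eq_0_iff) (auto intro!: mult_nonneg_nonneg less_imp_le[OF assms])
  moreover have "w x * (g x)\<^sup>2 = 0 \<longleftrightarrow> g x = 0" for x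
    using assms[of x] by simp
  ultimately show ?thesis
    by simp
qed

lemma dirichlet_form_expand:
  "dirichlet_form c w (\<lambda>x. g x + t * h x) (\<lambda>x. g x + t * h x)
     = dirichlet_form c w g g + 2 * t * dirichlet_form c w g h + t\<^sup>2 * dirichlet_form c w h h"
proof -
  let ?K = "\<lambda>x y. c x y * w x * w y"
  have pointwise: "?K x y * (g x + t * h x - (g y + t * h y)) * (g x + t * h x - (g y + t * h y))
      = ?K x y * (g x - g y) * (g x - g y) + 2 * t * (?K x y * (g x - g y) * (h x - h y))
        + t\<^sup>2 * (?K x y * (h x - h y) * (h x - h y))" for x y
    by (simp add: power2_eq_square algebra_simps)
  have sums: "(\<Sum>x\<in>UNIV. \<Sum>y\<in>UNIV. ?K x y * (g x - g y) * (g x - g y)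
        + 2 * t * (?K x y * (g x - g y) * (h x - h y)) + t\<^sup>2 * (?K x y * (h x - h y) * (h x - h y)))
      = (\<Sum>x\<in>UNIV. \<Sum>y\<in>UNIV. ?K x y * (g x - g y) * (g x - g y))
        + 2 * t * (\<Sum>x\<in>UNIV. \<Sum>y\<in>UNIV. ?K x y * (g x - g y) * (h x - h y))
        + t\<^sup>2 * (\<Sum>x\<in>UNIV. \<Sum>y\<in>UNIV. ?K x y * (h x - h y) * (h x - h y))"
    by (simp add: sum.distrib sum_distrib_left)
  show ?thesis
    unfolding dirichlet_form_def pointwise sums by (simp add: algebra_simps)
qed

lemma weighted_sqnorm_expand:
  "weighted_sqnorm w (\<lambda>x. g x + t * h x)
     = weighted_sqnorm w g + 2 * t * (\<Sum>x\<in>UNIV. w x * g x * h x) + t\<^sup>2 * weighted_sqnorm w h"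
  unfolding weighted_sqnorm_def
  by (simp add: sum.distrib sum_distrib_left power2_eq_square algebra_simps)

lemma dirichlet_form_scale:
  "dirichlet_form c w (\<lambda>x. a * g x) (\<lambda>x. a * g x) = a\<^sup>2 * dirichlet_form c w g g"
  unfolding dirichlet_form_def by (simp add: sum_distrib_left power2_eq_square algebra_simps)

lemma weighted_sqnorm_scale: "weighted_sqnorm w (\<lambda>x. a * g x) = a\<^sup>2 * weighted_sqnorm w g"
  unfolding weighted_sqnorm_def by (simp add: sum_distrib_left power2_eq_square algebra_simps)

lemma dirichlet_form_diff_const:
  "dirichlet_form c w (\<lambda>x. g x - m) (\<lambda>x. g x - m) = dirichlet_form c w g g"
  unfolding dirichlet_form_def by simp

lemma dirichlet_form_mono_weights:
  assumes "\<And>x y. c x y \<ge> 0" and "\<And>x. 0 \<le> w x" and "\<And>x. w x \<le> w' x"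
  shows "dirichlet_form c w g g \<le> dirichlet_form c w' g g"
  unfolding dirichlet_form_def
proof (intro mult_left_mono sum_mono)
  fix x y
  have "w x * w y \<le> w' x * w' y"
    using assms(2,3) by (intro mult_mono) (auto intro: order_trans)
  then have "c x y * (w x * w y) * (g x - g y)\<^sup>2 \<le> c x y * (w' x * w' y) * (g x - g y)\<^sup>2"
    by (intro mult_right_mono mult_left_mono assms(1)) auto
  then show "c x y * w x * w y * (g x - g y) * (g x - g y)
      \<le> c x y * w' x * w' y * (g x - g y) * (g x - g y)"
    by (simp add: power2_eq_square mult_ac)
qed simp

lemma dirichlet_form_eq_0_imp_constant:
  assumes "connected_weights c" and "\<And>x y. c x y \<ge> 0" and "\<And>x. w x > 0"
    and "dirichlet_form c w g g = 0"
  shows "g x = g y"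
proof -
  let ?T = "\<lambda>x y. c x y * w x * w y * (g x - g y)\<^sup>2"
  have T_nonneg: "0 \<le> ?T x y" for x y
    using assms(2,3) by (intro mult_nonneg_nonneg) (auto intro: less_imp_le)
  have "(\<Sum>x\<in>UNIV. \<Sum>y\<in>UNIV. ?T x y) = 0"
    using assms(4) unfolding dirichlet_form_def by (simp add: power2_eq_square mult_ac)
  then have T0: "?T x y = 0" for x y
    using T_nonneg by (simp add: sum_nonneg sum_nonneg_eq_0_iff)
  have edge: "g a = g b" if "c a b > 0" for a b
    using T0[of a b] that assms(3)[of a] assms(3)[of b] by simp
  have "(\<lambda>a b. c a b > 0)\<^sup>*\<^sup>* x y"
    using assms(1) unfolding connected_weights_def by blast
  then show ?thesis
    by (induction rule: rtranclp_induct) (simp_all add: edge)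
qed

section \<open>Spectral gap of the random walk\<close>

definition rw_eigenvalue :: "('v::finite \<Rightarrow> 'v \<Rightarrow> real) \<Rightarrow> ('v \<Rightarrow> real) \<Rightarrow> real \<Rightarrow> bool"
  where "rw_eigenvalue c alpha lam \<longleftrightarrow>
    (\<exists>g. (\<exists>x. g x \<noteq> 0) \<and> (\<forall>x. - rw_gen c alpha g x = lam * g x))"

lemma quadratic_nonneg_imp_linear_coeff_0:
  fixes B C :: real
  assumes "\<And>t. 0 \<le> 2 * t * B + t\<^sup>2 * C"
  shows "B = 0"
proof (rule ccontr)
  assume "B \<noteq> 0"
  define M where "M = \<bar>C\<bar> + 1"
  define t where "t = - B / M"
  have "M > 0"
    by (simp add: M_def)
  have "t\<^sup>2 * C \<le> t\<^sup>2 * M"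
    by (rule mult_left_mono) (auto simp: M_def)
  also have "t\<^sup>2 * M = B\<^sup>2 / M"
    using \<open>M > 0\<close> by (simp add: t_def power2_eq_square)
  also have "B\<^sup>2 / M < 2 * (B\<^sup>2 / M)"
    using \<open>B \<noteq> 0\<close> \<open>M > 0\<close> by (simp add: field_simps)
  also have "2 * (B\<^sup>2 / M) = - (2 * t * B)"
    by (simp add: t_def power2_eq_square)
  finally show False
    using assms[of t] by simp
qed

lemma exists_centred_nonzero:
  fixes alpha :: "'v::finite \<Rightarrow> real"
  assumes "card (UNIV :: 'v set) \<ge> 2" and "\<And>x. alpha x > 0"
  obtains u where "(\<Sum>x\<in>UNIV. alpha x * u x) = 0" and "\<exists>x. u x \<noteq> 0"
proof -
  obtain x1 y1 :: 'v where "x1 \<noteq> y1"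
    using assms(1) card_le_Suc0_iff_eq[of "UNIV :: 'v set"] by auto
  define u where "u x = (if x = x1 then alpha y1 else 0) - (if x = y1 then alpha x1 else 0)" for x
  have "(\<Sum>x\<in>UNIV. alpha x * u x) = alpha x1 * alpha y1 - alpha y1 * alpha x1"
    unfolding u_def right_diff_distrib sum_subtractf by (simp add: if_distrib cong: if_cong)
  moreover have "u x1 \<noteq> 0"
    using \<open>x1 \<noteq> y1\<close> assms(2)[of y1] by (simp add: u_def)
  ultimately show ?thesis
    using that[of u] by auto
qed

lemma compact_centred_unit_sphere:
  fixes alpha :: "'v::finite \<Rightarrow> real"
  assumes "\<And>x. alpha x > 0"
  shows "compact {v :: real^'v. (\<Sum>x\<in>UNIV. alpha x * v $ x) = 0 \<and> weighted_sqnorm alpha (($) v) = 1}"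
    (is "compact ?S")
proof -
  have "bounded ?S"
    unfolding bounded_iff
  proof (intro exI ballI)
    fix v :: "real^'v"
    assume "v \<in> ?S"
    have "\<bar>v $ i\<bar> \<le> sqrt (1 / alpha i)" for i
    proof -
      have "alpha i * (v $ i)\<^sup>2 \<le> weighted_sqnorm alpha (($) v)"
        unfolding weighted_sqnorm_def
        by (rule member_le_sum) (auto intro: mult_nonneg_nonneg less_imp_le[OF assms])
      then have "(v $ i)\<^sup>2 \<le> 1 / alpha i"
        using \<open>v \<in> ?S\<close> assms[of i] by (simp add: field_simps)
      then show ?thesis
        using real_sqrt_le_mono by fastforce
    qed
    then have "(\<Sum>i\<in>UNIV. \<bar>v $ i\<bar>) \<le> (\<Sum>i\<in>UNIV. sqrt (1 / alpha i))"
      by (intro sum_mono)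
    then show "norm v \<le> (\<Sum>i\<in>UNIV. sqrt (1 / alpha i))"
      using norm_le_l1_cart[of v] by linarith
  qed
  moreover have "closed ?S"
    unfolding weighted_sqnorm_def
    by (intro closed_Collect_conj closed_Collect_eq continuous_intros)
  ultimately show ?thesis
    by (simp add: compact_eq_bounded_closed)
qed

lemma rayleigh_quotient_minimizer:
  fixes c :: "'v::finite \<Rightarrow> 'v \<Rightarrow> real" and alpha :: "'v \<Rightarrow> real"
  assumes "card (UNIV :: 'v set) \<ge> 2" and alpha_pos: "\<And>x. alpha x > 0"
  obtains g where "(\<Sum>x\<in>UNIV. alpha x * g x) = 0" and "weighted_sqnorm alpha g = 1"
    and "\<And>u. (\<Sum>x\<in>UNIV. alpha x * u x) = 0 \<Longrightarrow>
           dirichlet_form c alpha g g * weighted_sqnorm alpha u \<le> dirichlet_form c alpha u u"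
proof -
  let ?S = "{v :: real^'v. (\<Sum>x\<in>UNIV. alpha x * v $ x) = 0 \<and> weighted_sqnorm alpha (($) v) = 1}"
  let ?D = "\<lambda>u. dirichlet_form c alpha u u"
  have vec_nth_lambda: "(($) (\<chi> x. f x)) = f" for f :: "'v \<Rightarrow> real"
    by (simp add: fun_eq_iff)
  have sqnorm_pos: "weighted_sqnorm alpha u > 0" if "\<exists>x. u x \<noteq> 0" for u
  proof -
    have "weighted_sqnorm alpha u \<ge> 0"
      by (rule weighted_sqnorm_nonneg) (simp add: alpha_pos less_imp_le)
    moreover have "weighted_sqnorm alpha u \<noteq> 0"
      using that weighted_sqnorm_eq_0_iff[of alpha u, OF alpha_pos] by simp
    ultimately show ?thesis
      by simp
  qed
  have normalised: "(\<chi> x. u x / sqrt (weighted_sqnorm alpha u)) \<in> ?S"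
    if "(\<Sum>x\<in>UNIV. alpha x * u x) = 0" and "\<exists>x. u x \<noteq> 0" for u
  proof -
    let ?s = "sqrt (weighted_sqnorm alpha u)"
    have "weighted_sqnorm alpha (($) (\<chi> x. u x / ?s)) = weighted_sqnorm alpha (\<lambda>x. (1 / ?s) * u x)"
      by (simp add: vec_nth_lambda)
    also have "\<dots> = 1"
      using sqnorm_pos[OF that(2)] unfolding weighted_sqnorm_scale by (simp add: power_divide)
    finally show ?thesis
      using that(1) by (simp add: sum_divide_distrib[symmetric])
  qed
  obtain u0 where "(\<Sum>x\<in>UNIV. alpha x * u0 x) = 0" and "\<exists>x. u0 x \<noteq> 0"
    using exists_centred_nonzero[OF assms] .
  then have "?S \<noteq> {}"
    using normalised by blast
  moreover have "continuous_on ?S (\<lambda>v. ?D (($) v))"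
    unfolding dirichlet_form_def by (intro continuous_intros)
  ultimately obtain v0 where "v0 \<in> ?S" and v0_min: "\<And>v. v \<in> ?S \<Longrightarrow> ?D (($) v0) \<le> ?D (($) v)"
    using continuous_attains_inf[OF compact_centred_unit_sphere[of alpha, OF alpha_pos]] by blast
  show ?thesis
  proof (rule that)
    show "(\<Sum>x\<in>UNIV. alpha x * v0 $ x) = 0" and "weighted_sqnorm alpha (($) v0) = 1"
      using \<open>v0 \<in> ?S\<close> by auto
    fix u
    assume centred: "(\<Sum>x\<in>UNIV. alpha x * u x) = 0"
    show "?D (($) v0) * weighted_sqnorm alpha u \<le> ?D u"
    proof (cases "\<exists>x. u x \<noteq> 0")
      case False
      then show ?thesis
        by (simp add: weighted_sqnorm_def dirichlet_form_def)
    next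
      case True
      let ?s = "sqrt (weighted_sqnorm alpha u)"
      have "?D (($) v0) \<le> ?D (($) (\<chi> x. u x / ?s))"
        by (rule v0_min[OF normalised[OF centred True]])
      also have "\<dots> = ?D (\<lambda>x. (1 / ?s) * u x)"
        by (simp add: vec_nth_lambda)
      also have "\<dots> = ?D u / weighted_sqnorm alpha u"
        using sqnorm_pos[OF True] unfolding dirichlet_form_scale by (simp add: power_divide)
      finally show ?thesis
        using sqnorm_pos[OF True] by (simp add: field_simps)
    qed
  qed
qed

lemma rayleigh_minimizer_eigenfunction:
  fixes c :: "'v::finite \<Rightarrow> 'v \<Rightarrow> real" and alpha :: "'v \<Rightarrow> real"
  assumes sym: "\<And>x y. c x y = c y x" and alpha_pos: "\<And>x. alpha x > 0"
    and g_centred: "(\<Sum>x\<in>UNIV. alpha x * g x) = 0" and g_norm: "weighted_sqnorm alpha g = 1"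
    and g_min: "\<And>u. (\<Sum>x\<in>UNIV. alpha x * u x) = 0 \<Longrightarrow>
                  dirichlet_form c alpha g g * weighted_sqnorm alpha u \<le> dirichlet_form c alpha u u"
  shows "- rw_gen c alpha g x = dirichlet_form c alpha g g * g x"
proof -
  define rho where "rho = dirichlet_form c alpha g g"
  define r where "r y = rw_gen c alpha g y + rho * g y" for y
  have r_orth: "(\<Sum>x\<in>UNIV. alpha x * h x * r x) = 0"
    if h_centred: "(\<Sum>x\<in>UNIV. alpha x * h x) = 0" for h
  proof -
    have "0 \<le> 2 * t * (dirichlet_form c alpha g h - rho * (\<Sum>x\<in>UNIV. alpha x * g x * h x))
              + t\<^sup>2 * (dirichlet_form c alpha h h - rho * weighted_sqnorm alpha h)" for t
    proof -
      have "(\<Sum>x\<in>UNIV. alpha x * (g x + t * h x))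
          = (\<Sum>x\<in>UNIV. alpha x * g x) + t * (\<Sum>x\<in>UNIV. alpha x * h x)"
        by (simp add: distrib_left sum.distrib sum_distrib_left mult_ac)
      then have "(\<Sum>x\<in>UNIV. alpha x * (g x + t * h x)) = 0"
        using g_centred h_centred by simp
      from g_min[OF this] show ?thesis
        unfolding dirichlet_form_expand weighted_sqnorm_expand g_norm rho_def
        by (simp add: algebra_simps)
    qed
    then have "dirichlet_form c alpha g h = rho * (\<Sum>x\<in>UNIV. alpha x * g x * h x)"
      using quadratic_nonneg_imp_linear_coeff_0 by fastforce
    moreover have "(\<Sum>x\<in>UNIV. alpha x * h x * r x)
        = (\<Sum>x\<in>UNIV. alpha x * h x * rw_gen c alpha g x) + rho * (\<Sum>x\<in>UNIV. alpha x * g x * h x)"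
      by (simp add: r_def distrib_left sum.distrib sum_distrib_left mult_ac)
    ultimately show ?thesis
      using dirichlet_form_eq_sum_rw_gen[of c alpha g h, OF sym] by simp
  qed
  have "(\<Sum>x\<in>UNIV. alpha x * r x) = 0"
    unfolding r_def using sum_rw_gen[of c alpha g, OF sym] g_centred
    by (simp add: distrib_left sum.distrib sum_distrib_left[symmetric] mult.left_commute)
  from r_orth[OF this] have "weighted_sqnorm alpha r = 0"
    by (simp add: weighted_sqnorm_def power2_eq_square mult_ac)
  then have "r x = 0"
    using weighted_sqnorm_eq_0_iff[of alpha r, OF alpha_pos] by simp
  then show ?thesis
    by (simp add: r_def rho_def)
qed

lemma exists_rw_eigenvalue_poincare:
  fixes c :: "'v::finite \<Rightarrow> 'v \<Rightarrow> real" and alpha :: "'v \<Rightarrow> real"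
  assumes card: "card (UNIV :: 'v set) \<ge> 2" and sym: "\<And>x y. c x y = c y x"
    and c_nonneg: "\<And>x y. c x y \<ge> 0" and conn: "connected_weights c"
    and alpha_pos: "\<And>x. alpha x > 0"
  obtains rho where "rho \<noteq> 0" and "rw_eigenvalue c alpha rho"
    and "\<And>u. (\<Sum>x\<in>UNIV. alpha x * u x) = 0 \<Longrightarrow>
           rho * weighted_sqnorm alpha u \<le> dirichlet_form c alpha u u"
proof -
  obtain g where g_centred: "(\<Sum>x\<in>UNIV. alpha x * g x) = 0"
    and g_norm: "weighted_sqnorm alpha g = 1"
    and g_min: "\<And>u. (\<Sum>x\<in>UNIV. alpha x * u x) = 0 \<Longrightarrow>
                  dirichlet_form c alpha g g * weighted_sqnorm alpha u \<le> dirichlet_form c alpha u u"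
    using rayleigh_quotient_minimizer[of alpha c, OF card alpha_pos] by blast
  obtain x0 where "g x0 \<noteq> 0"
    using g_norm by (force simp: weighted_sqnorm_def)
  have "dirichlet_form c alpha g g \<noteq> 0"
  proof
    assume "dirichlet_form c alpha g g = 0"
    then have "g = (\<lambda>_. g x0)"
      using dirichlet_form_eq_0_imp_constant[of c alpha, OF conn c_nonneg alpha_pos] by blast
    then obtain k where k: "g = (\<lambda>_. k)" and "k \<noteq> 0"
      using \<open>g x0 \<noteq> 0\<close> by auto
    then have "(\<Sum>x\<in>UNIV. alpha x * g x) = k * (\<Sum>x\<in>UNIV. alpha x)"
      by (simp add: sum_distrib_left mult_ac)
    moreover have "(\<Sum>x\<in>UNIV. alpha x) > 0"
      by (rule sum_pos) (auto intro: alpha_pos)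
    ultimately show False
      using g_centred \<open>k \<noteq> 0\<close> by simp
  qed
  moreover have "rw_eigenvalue c alpha (dirichlet_form c alpha g g)"
    unfolding rw_eigenvalue_def
    using \<open>g x0 \<noteq> 0\<close> rayleigh_minimizer_eigenfunction[of c alpha, OF sym alpha_pos g_centred g_norm g_min] by blast
  ultimately show ?thesis
    using that g_min by blast
qed

section \<open>Dirichlet form of the inclusion process\<close>

lemma sip_jumps_add_particle_eq_rw_gen:
  "(\<Sum>y\<in>UNIV. c x y * (alpha y + real (add_particle xi x y))
       * (f (move (add_particle xi x) x y) - f (add_particle xi x)))
   = rw_gen c (\<lambda>y. alpha y + real (xi y)) (\<lambda>y. f (add_particle xi y)) x"
  unfolding rw_gen_def move_add_particle
  by (intro sum.cong refl) (auto simp: add_particle_apply)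

lemma sip_dirichlet_identity:
  fixes c :: "'v::finite \<Rightarrow> 'v \<Rightarrow> real" and alpha :: "'v \<Rightarrow> real"
  assumes sym: "\<And>x y. c x y = c y x"
  shows "(\<Sum>eta\<in>Xi (Suc k). sip_weight alpha eta * f eta * sip_gen c alpha f eta)
       = - (\<Sum>xi\<in>Xi k. sip_weight alpha xi * dirichlet_form c (\<lambda>x. alpha x + real (xi x))
              (\<lambda>x. f (add_particle xi x)) (\<lambda>x. f (add_particle xi x)))"
proof -
  let ?w = "\<lambda>xi x. alpha x + real (xi x)"
  let ?g = "\<lambda>xi x. f (add_particle xi x)"
  let ?J = "\<lambda>eta x. \<Sum>y\<in>UNIV. c x y * (alpha y + real (eta y)) * (f (move eta x y) - f eta)"
  have "(\<Sum>eta\<in>Xi (Suc k). sip_weight alpha eta * f eta * sip_gen c alpha f eta)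
      = (\<Sum>x\<in>UNIV. \<Sum>eta\<in>Xi (Suc k). real (eta x) * (sip_weight alpha eta * f eta * ?J eta x))"
    unfolding sip_gen_def sum_distrib_left by (subst sum.swap) (simp add: mult_ac)
  also have "\<dots> = (\<Sum>x\<in>UNIV. \<Sum>xi\<in>Xi k.
      (sip_weight alpha (add_particle xi x) * real (Suc (xi x))) * ?g xi x * ?J (add_particle xi x) x)"
    unfolding sum_Xi_Suc_occupation by (simp add: mult_ac)
  also have "\<dots> = (\<Sum>xi\<in>Xi k. sip_weight alpha xi *
      (\<Sum>x\<in>UNIV. ?w xi x * ?g xi x * rw_gen c (?w xi) (?g xi) x))"
    unfolding sip_weight_add_particle sip_jumps_add_particle_eq_rw_gen
    by (subst sum.swap) (simp add: sum_distrib_left mult_ac)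
  also have "\<dots> = - (\<Sum>xi\<in>Xi k. sip_weight alpha xi * dirichlet_form c (?w xi) (?g xi) (?g xi))"
    by (simp add: dirichlet_form_eq_sum_rw_gen[of c, OF sym] sum_negf)
  finally show ?thesis .
qed

lemma sip_sqnorm_identity:
  "real (Suc k) * (\<Sum>eta\<in>Xi (Suc k). sip_weight alpha eta * (f eta)\<^sup>2)
     = (\<Sum>xi\<in>Xi k. sip_weight alpha xi *
          weighted_sqnorm (\<lambda>x. alpha x + real (xi x)) (\<lambda>x. f (add_particle xi x)))"
proof -
  have "real (Suc k) * (\<Sum>eta\<in>Xi (Suc k). sip_weight alpha eta * (f eta)\<^sup>2)
      = (\<Sum>eta\<in>Xi (Suc k). (\<Sum>x\<in>UNIV. real (eta x)) * (sip_weight alpha eta * (f eta)\<^sup>2))"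
    unfolding sum_distrib_left
    by (intro sum.cong refl) (simp add: Xi_def flip: of_nat_sum)
  also have "\<dots> = (\<Sum>x\<in>UNIV. \<Sum>eta\<in>Xi (Suc k). real (eta x) * (sip_weight alpha eta * (f eta)\<^sup>2))"
    by (simp add: sum_distrib_right sum.swap[of _ "Xi (Suc k)"])
  also have "\<dots> = (\<Sum>x\<in>UNIV. \<Sum>xi\<in>Xi k.
      (sip_weight alpha (add_particle xi x) * real (Suc (xi x))) * (f (add_particle xi x))\<^sup>2)"
    unfolding sum_Xi_Suc_occupation by (simp add: mult_ac)
  also have "\<dots> = (\<Sum>xi\<in>Xi k. sip_weight alpha xi *
      weighted_sqnorm (\<lambda>x. alpha x + real (xi x)) (\<lambda>x. f (add_particle xi x)))"
    unfolding sip_weight_add_particle weighted_sqnorm_def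
    by (subst sum.swap) (simp add: sum_distrib_left mult_ac)
  finally show ?thesis .
qed

lemma sip_eigenfunction_energy:
  fixes c :: "'v::finite \<Rightarrow> 'v \<Rightarrow> real" and alpha :: "'v \<Rightarrow> real"
  assumes sym: "\<And>x y. c x y = c y x"
    and eigen: "\<And>eta. eta \<in> Xi (Suc k) \<Longrightarrow> - sip_gen c alpha f eta = lam * f eta"
  shows "lam * (\<Sum>eta\<in>Xi (Suc k). sip_weight alpha eta * (f eta)\<^sup>2)
       = (\<Sum>xi\<in>Xi k. sip_weight alpha xi * dirichlet_form c (\<lambda>x. alpha x + real (xi x))
            (\<lambda>x. f (add_particle xi x)) (\<lambda>x. f (add_particle xi x)))"
proof -
  have "sip_gen c alpha f eta = - (lam * f eta)" if "eta \<in> Xi (Suc k)" for eta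
    using eigen[OF that] by simp
  then have "lam * (\<Sum>eta\<in>Xi (Suc k). sip_weight alpha eta * (f eta)\<^sup>2)
      = - (\<Sum>eta\<in>Xi (Suc k). sip_weight alpha eta * f eta * sip_gen c alpha f eta)"
    unfolding sum_distrib_left sum_negf[symmetric]
    by (intro sum.cong refl) (simp add: power2_eq_square)
  then show ?thesis
    by (simp add: sip_dirichlet_identity[of c, OF sym])
qed

lemma sum_sip_weight_sq_pos:
  assumes "\<And>x. alpha x > 0" and "eta0 \<in> Xi k" and "f eta0 \<noteq> 0"
  shows "(\<Sum>eta\<in>Xi k. sip_weight alpha eta * (f eta)\<^sup>2) > 0"
proof (rule sum_pos2[OF finite_Xi assms(2)])
  show "0 < sip_weight alpha eta0 * (f eta0)\<^sup>2"
    using assms(3) sip_weight_pos[of alpha, OF assms(1)] by simp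
  show "0 \<le> sip_weight alpha eta * (f eta)\<^sup>2" for eta
    using sip_weight_pos[of alpha, OF assms(1)] by (simp add: less_imp_le)
qed

section \<open>Intertwining\<close>

definition pair_gen :: "('v \<Rightarrow> real) \<Rightarrow> (('v \<Rightarrow> nat) \<Rightarrow> real) \<Rightarrow> ('v \<Rightarrow> nat) \<Rightarrow> 'v \<Rightarrow> 'v \<Rightarrow> real"
  where "pair_gen alpha g eta x y =
    real (eta x) * (alpha y + real (eta y)) * (g (move eta x y) - g eta)"

definition sip_intertwiner ::
    "('v::finite \<Rightarrow> real) \<Rightarrow> (('v \<Rightarrow> nat) \<Rightarrow> real) \<Rightarrow> ('v \<Rightarrow> nat) \<Rightarrow> real"
  where "sip_intertwiner alpha f xi = (\<Sum>z\<in>UNIV. (alpha z + real (xi z)) * f (add_particle xi z))"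

lemma sip_gen_eq_sum_pair_gen:
  "sip_gen c alpha g eta = (\<Sum>x\<in>UNIV. \<Sum>y\<in>UNIV. c x y * pair_gen alpha g eta x y)"
  unfolding sip_gen_def pair_gen_def by (simp add: sum_distrib_left mult_ac)

lemma pair_gen_diag: "pair_gen alpha g eta x x = 0"
  by (cases "eta x = 0") (auto simp: pair_gen_def move_def Let_def)

lemma sum_UNIV_split2:
  fixes F :: "'v::finite \<Rightarrow> real"
  assumes "x \<noteq> y"
  shows "(\<Sum>z\<in>UNIV. F z) = F x + F y + (\<Sum>z\<in>UNIV-{x,y}. F z)"
proof -
  have "(\<Sum>z\<in>UNIV. F z) = (\<Sum>z\<in>UNIV-{x,y}. F z) + (\<Sum>z\<in>{x,y}. F z)"
    by (rule sum.subset_diff) auto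
  then show ?thesis
    using assms by simp
qed

lemma sip_intertwiner_move_diff:
  fixes alpha :: "'v::finite \<Rightarrow> real"
  assumes "x \<noteq> y" and "xi x \<noteq> 0"
  shows "sip_intertwiner alpha g (move xi x y) - sip_intertwiner alpha g xi
       = ((alpha x + real (xi x) - 1) * g (add_particle xi y)
            - (alpha x + real (xi x)) * g (add_particle xi x))
         + ((alpha y + real (xi y) + 1) * g (add_particle (move xi x y) y)
            - (alpha y + real (xi y)) * g (add_particle xi y))
         + (\<Sum>z\<in>UNIV-{x,y}. (alpha z + real (xi z))
              * (g (add_particle (move xi x y) z) - g (add_particle xi z)))"
proof -
  have "(\<Sum>z\<in>UNIV-{x,y}. (alpha z + real (move xi x y z)) * g (add_particle (move xi x y) z)
          - (alpha z + real (xi z)) * g (add_particle xi z))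
      = (\<Sum>z\<in>UNIV-{x,y}. (alpha z + real (xi z))
          * (g (add_particle (move xi x y) z) - g (add_particle xi z)))"
    using assms(1) by (intro sum.cong refl) (auto simp: move_apply right_diff_distrib)
  then show ?thesis
    unfolding sip_intertwiner_def sum_UNIV_split2[OF assms(1)]
    using assms by (simp add: sum_subtractf move_apply add_particle_move of_nat_diff algebra_simps)
qed

(* The defect is antisymmetric in x and y, so it cancels in the generator, whose rates c
   are symmetric. *)
lemma pair_gen_intertwiner:
  fixes alpha :: "'v::finite \<Rightarrow> real"
  shows "(\<Sum>z\<in>UNIV. (alpha z + real (xi z)) * pair_gen alpha g (add_particle xi z) x y)
           - pair_gen alpha (sip_intertwiner alpha g) xi x y
         = (alpha x + real (xi x)) * (alpha y + real (xi y))
             * (g (add_particle xi y) - g (add_particle xi x))"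
proof (cases "x = y")
  case True
  then show ?thesis
    by (simp add: pair_gen_diag)
next
  case xy: False
  let ?w = "\<lambda>z. alpha z + real (xi z)"
  let ?F = "\<lambda>z. ?w z * pair_gen alpha g (add_particle xi z) x y"
  have F_x: "?F x = ?w x * (real (xi x) + 1) * (alpha y + real (xi y))
                     * (g (add_particle xi y) - g (add_particle xi x))"
    using xy by (simp add: pair_gen_def move_add_particle add_particle_apply)
  show ?thesis
  proof (cases "xi x = 0")
    case True
    have "?F z = 0" if "z \<noteq> x" for z
      using that True by (simp add: pair_gen_def add_particle_apply)
    then have "(\<Sum>z\<in>UNIV-{x}. ?F z) = 0"
      by (intro sum.neutral) auto
    then have "(\<Sum>z\<in>UNIV. ?F z) = ?F x"
      by (simp add: sum.remove[of UNIV x])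
    then show ?thesis
      using True F_x by (simp add: pair_gen_def)
  next
    case False
    let ?m = "move xi x y"
    let ?R = "\<Sum>z\<in>UNIV-{x,y}. ?w z * (g (add_particle ?m z) - g (add_particle xi z))"
    have F_y: "?F y = ?w y * real (xi x) * (?w y + 1) * (g (add_particle ?m y) - g (add_particle xi y))"
      using xy by (simp add: pair_gen_def move_add_particle_other add_particle_apply)
    have F_rest: "(\<Sum>z\<in>UNIV-{x,y}. ?F z) = real (xi x) * ?w y * ?R"
      unfolding sum_distrib_left
      by (intro sum.cong refl) (auto simp: pair_gen_def move_add_particle_other add_particle_apply mult_ac)
    have lhs: "pair_gen alpha (sip_intertwiner alpha g) xi x y
        = real (xi x) * ?w y * (sip_intertwiner alpha g ?m - sip_intertwiner alpha g xi)"
      by (simp add: pair_gen_def)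
    have "(\<Sum>z\<in>UNIV. ?F z) = ?F x + ?F y + (\<Sum>z\<in>UNIV-{x,y}. ?F z)"
      by (rule sum_UNIV_split2[OF xy])
    then show ?thesis
      unfolding lhs sip_intertwiner_move_diff[where xi = xi, OF xy False] F_x F_y F_rest
      by (simp add: algebra_simps)
  qed
qed

lemma sip_gen_intertwiner:
  fixes c :: "'v::finite \<Rightarrow> 'v \<Rightarrow> real" and alpha :: "'v \<Rightarrow> real"
  assumes sym: "\<And>x y. c x y = c y x"
  shows "sip_gen c alpha (sip_intertwiner alpha g) xi
       = (\<Sum>z\<in>UNIV. (alpha z + real (xi z)) * sip_gen c alpha g (add_particle xi z))"
proof -
  let ?w = "\<lambda>z. alpha z + real (xi z)"
  let ?p = "\<lambda>z x y. pair_gen alpha g (add_particle xi z) x y"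
  have "(\<Sum>z\<in>UNIV. ?w z * sip_gen c alpha g (add_particle xi z))
      = (\<Sum>z\<in>UNIV. \<Sum>x\<in>UNIV. \<Sum>y\<in>UNIV. c x y * (?w z * ?p z x y))"
    unfolding sip_gen_eq_sum_pair_gen sum_distrib_left by (simp add: mult_ac)
  also have "\<dots> = (\<Sum>x\<in>UNIV. \<Sum>z\<in>UNIV. \<Sum>y\<in>UNIV. c x y * (?w z * ?p z x y))"
    by (rule sum.swap)
  also have "\<dots> = (\<Sum>x\<in>UNIV. \<Sum>y\<in>UNIV. c x y * (\<Sum>z\<in>UNIV. ?w z * ?p z x y))"
    unfolding sum_distrib_left by (rule sum.cong[OF refl], rule sum.swap)
  finally have "(\<Sum>z\<in>UNIV. ?w z * sip_gen c alpha g (add_particle xi z))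
      - sip_gen c alpha (sip_intertwiner alpha g) xi
      = (\<Sum>x\<in>UNIV. \<Sum>y\<in>UNIV. c x y * ((\<Sum>z\<in>UNIV. ?w z * ?p z x y)
                                         - pair_gen alpha (sip_intertwiner alpha g) xi x y))"
    unfolding sip_gen_eq_sum_pair_gen by (simp add: right_diff_distrib sum_subtractf)
  also have "\<dots> = (\<Sum>x\<in>UNIV. \<Sum>y\<in>UNIV. (c x y * ?w x * ?w y)
                      * (g (add_particle xi y) - g (add_particle xi x)))"
    by (simp only: pair_gen_intertwiner mult.assoc)
  also have "\<dots> = 0"
    by (rule sum_symmetric_mult_diff) (simp add: sym mult_ac)
  finally show ?thesis
    by simp
qed

section \<open>Eigenvalues of the inclusion process\<close>

lemma Xi_0: "Xi 0 = {\<lambda>_. 0 :: nat}"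
  by (auto simp: Xi_def fun_eq_iff)

lemma Xi_Suc0_cases:
  assumes "eta \<in> Xi (Suc 0)"
  obtains x where "eta = add_particle (\<lambda>_. 0) x"
proof -
  obtain x where "eta x \<noteq> 0"
    using assms by (force simp: Xi_def)
  then have "eta \<in> (\<lambda>xi. add_particle xi x) ` Xi 0"
    using bij_betw_imp_surj_on[OF bij_betw_add_particle[of x 0]] assms by auto
  then show ?thesis
    using that by (auto simp: Xi_0)
qed

lemma sip_eigenvalue_0: "sip_eigenvalue c alpha 0 lam \<Longrightarrow> lam = 0"
  unfolding sip_eigenvalue_def Xi_0 by (auto simp: sip_gen_def)

lemma sip_eigenvalue_nonneg:
  fixes c :: "'v::finite \<Rightarrow> 'v \<Rightarrow> real" and alpha :: "'v \<Rightarrow> real"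
  assumes sym: "\<And>x y. c x y = c y x" and c_nonneg: "\<And>x y. c x y \<ge> 0"
    and alpha_pos: "\<And>x. alpha x > 0" and "sip_eigenvalue c alpha k lam"
  shows "lam \<ge> 0"
proof (cases k)
  case 0
  then show ?thesis
    using assms(4) sip_eigenvalue_0 by blast
next
  case (Suc j)
  obtain f eta0 where "eta0 \<in> Xi (Suc j)" and "f eta0 \<noteq> 0"
    and eigen: "\<And>eta. eta \<in> Xi (Suc j) \<Longrightarrow> - sip_gen c alpha f eta = lam * f eta"
    using assms(4) unfolding sip_eigenvalue_def Suc by blast
  have "0 \<le> alpha x + real (xi x)" for x and xi :: "'v \<Rightarrow> nat"
    using alpha_pos[of x] by simp
  then have "0 \<le> (\<Sum>xi\<in>Xi j. sip_weight alpha xi * dirichlet_form c (\<lambda>x. alpha x + real (xi x))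
              (\<lambda>x. f (add_particle xi x)) (\<lambda>x. f (add_particle xi x)))"
    using sip_weight_pos[of alpha, OF alpha_pos]
    by (intro sum_nonneg mult_nonneg_nonneg dirichlet_form_nonneg c_nonneg) (simp_all add: less_imp_le)
  then have "0 \<le> lam * (\<Sum>eta\<in>Xi (Suc j). sip_weight alpha eta * (f eta)\<^sup>2)"
    by (simp add: sip_eigenfunction_energy[of c, OF sym eigen])
  moreover have "(\<Sum>eta\<in>Xi (Suc j). sip_weight alpha eta * (f eta)\<^sup>2) > 0"
    using sum_sip_weight_sq_pos[of alpha, OF alpha_pos] \<open>eta0 \<in> Xi (Suc j)\<close> \<open>f eta0 \<noteq> 0\<close> by blast
  ultimately show ?thesis
    by (simp add: zero_le_mult_iff)
qed

lemma sip_intertwiner_eigenfunction: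
  fixes c :: "'v::finite \<Rightarrow> 'v \<Rightarrow> real" and alpha :: "'v \<Rightarrow> real"
  assumes sym: "\<And>x y. c x y = c y x"
    and eigen: "\<And>eta. eta \<in> Xi (Suc k) \<Longrightarrow> - sip_gen c alpha f eta = lam * f eta"
    and "xi \<in> Xi k"
  shows "- sip_gen c alpha (sip_intertwiner alpha f) xi = lam * sip_intertwiner alpha f xi"
proof -
  have "sip_gen c alpha f (add_particle xi z) = - (lam * f (add_particle xi z))" for z
    using eigen[OF add_particle_in_Xi[OF \<open>xi \<in> Xi k\<close>]] by (simp add: equation_minus_iff)
  then show ?thesis
    by (simp add: sip_gen_intertwiner[of c, OF sym] sip_intertwiner_def sum_negf[symmetric]
        sum_distrib_left mult_ac)
qed

definition additive_lift :: "('v::finite \<Rightarrow> real) \<Rightarrow> ('v \<Rightarrow> nat) \<Rightarrow> real"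
  where "additive_lift g eta = (\<Sum>x\<in>UNIV. real (eta x) * g x)"

lemma additive_lift_add_particle: "additive_lift g (add_particle xi z) = additive_lift g xi + g z"
proof -
  have "additive_lift g (add_particle xi z) = (\<Sum>x\<in>UNIV. real (xi x) * g x + (if x = z then g x else 0))"
    unfolding additive_lift_def by (intro sum.cong refl) (auto simp: add_particle_def distrib_right)
  then show ?thesis
    by (simp add: sum.distrib additive_lift_def)
qed

lemma additive_lift_move:
  "real (eta x) * (additive_lift g (move eta x y) - additive_lift g eta) = real (eta x) * (g y - g x)"
proof (cases "eta x = 0")
  case False
  then have "eta = add_particle (eta(x := eta x - 1)) x"
    by (rule add_particle_remove[symmetric])
  then show ?thesis
    by (metis move_add_particle additive_lift_add_particle add_diff_cancel_left add.commute)
qed simp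

lemma sip_gen_additive_lift:
  fixes c :: "'v::finite \<Rightarrow> 'v \<Rightarrow> real"
  assumes sym: "\<And>x y. c x y = c y x"
  shows "sip_gen c alpha (additive_lift g) eta = (\<Sum>x\<in>UNIV. real (eta x) * rw_gen c alpha g x)"
proof -
  have "sip_gen c alpha (additive_lift g) eta
      = (\<Sum>x\<in>UNIV. \<Sum>y\<in>UNIV. c x y * (alpha y + real (eta y)) * (real (eta x) * (g y - g x)))"
    unfolding sip_gen_def sum_distrib_left additive_lift_move[symmetric] by (simp add: mult_ac)
  also have "\<dots> = (\<Sum>x\<in>UNIV. real (eta x) * rw_gen c alpha g x)
      + (\<Sum>x\<in>UNIV. \<Sum>y\<in>UNIV. (c x y * real (eta x) * real (eta y)) * (g y - g x))"
    unfolding rw_gen_def by (simp add: sum_distrib_left sum.distrib[symmetric] algebra_simps)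
  also have "(\<Sum>x\<in>UNIV. \<Sum>y\<in>UNIV. (c x y * real (eta x) * real (eta y)) * (g y - g x)) = 0"
    by (rule sum_symmetric_mult_diff) (simp add: sym mult_ac)
  finally show ?thesis
    by simp
qed

lemma rw_eigenvalue_imp_sip_eigenvalue:
  fixes c :: "'v::finite \<Rightarrow> 'v \<Rightarrow> real"
  assumes sym: "\<And>x y. c x y = c y x" and "rw_eigenvalue c alpha lam" and "k \<ge> 1"
  shows "sip_eigenvalue c alpha k lam"
proof -
  obtain g x0 where "g x0 \<noteq> 0" and eigen: "\<And>x. - rw_gen c alpha g x = lam * g x"
    using assms(2) unfolding rw_eigenvalue_def by blast
  have "rw_gen c alpha g x = - (lam * g x)" for x
    using eigen[of x] by (simp add: equation_minus_iff)
  then have "- sip_gen c alpha (additive_lift g) eta = lam * additive_lift g eta" for eta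
    unfolding sip_gen_additive_lift[of c, OF sym] additive_lift_def
    by (simp add: sum_distrib_left sum_negf[symmetric] mult_ac)
  moreover define eta0 where "eta0 = (\<lambda>_. 0 :: nat)(x0 := k)"
  have "eta0 \<in> Xi k"
    by (simp add: Xi_def eta0_def if_distrib cong: if_cong)
  moreover have "additive_lift g eta0 = (\<Sum>x\<in>UNIV. if x = x0 then real k * g x else 0)"
    unfolding additive_lift_def eta0_def by (intro sum.cong refl) auto
  then have "additive_lift g eta0 \<noteq> 0"
    using \<open>g x0 \<noteq> 0\<close> \<open>k \<ge> 1\<close> by simp
  ultimately show ?thesis
    unfolding sip_eigenvalue_def by blast
qed

lemma sip_eigenvalue_Suc0_imp_rw_eigenvalue:
  assumes "sip_eigenvalue c alpha (Suc 0) lam"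
  shows "rw_eigenvalue c alpha lam"
proof -
  let ?delta = "add_particle (\<lambda>_. 0 :: nat)"
  obtain f eta0 where "eta0 \<in> Xi (Suc 0)" and "f eta0 \<noteq> 0"
    and eigen: "\<And>eta. eta \<in> Xi (Suc 0) \<Longrightarrow> - sip_gen c alpha f eta = lam * f eta"
    using assms unfolding sip_eigenvalue_def by blast
  obtain x0 where "f (?delta x0) \<noteq> 0"
    using Xi_Suc0_cases[OF \<open>eta0 \<in> Xi (Suc 0)\<close>] \<open>f eta0 \<noteq> 0\<close> by metis
  moreover have "sip_gen c alpha f (?delta x) = rw_gen c alpha (\<lambda>y. f (?delta y)) x" for x
  proof -
    let ?J = "\<lambda>x'. \<Sum>y\<in>UNIV. c x' y * (alpha y + real (?delta x y))
                        * (f (move (?delta x) x' y) - f (?delta x))"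
    have "sip_gen c alpha f (?delta x) = (\<Sum>x'\<in>UNIV. if x' = x then ?J x' else 0)"
      unfolding sip_gen_def by (intro sum.cong refl) (simp add: add_particle_def)
    then show ?thesis
      using sip_jumps_add_particle_eq_rw_gen[of c x alpha "\<lambda>_. 0" f] by simp
  qed
  moreover have "?delta x \<in> Xi (Suc 0)" for x
    by (rule add_particle_in_Xi) (simp add: Xi_0)
  ultimately show ?thesis
    unfolding rw_eigenvalue_def using eigen by metis
qed

section \<open>Lower bound on the eigenvalues\<close>

lemma min_one_mult_le:
  fixes a t :: real
  assumes "a > 0" and "t \<ge> 0"
  shows "min 1 a * (1 + t / a) \<le> 1 + t"
proof (cases "a \<ge> 1")
  case True
  then have "t / a \<le> t"
    using assms(2) by (simp add: divide_le_eq mult_le_cancel_left1)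
  then show ?thesis
    using True by simp
next
  case False
  then show ?thesis
    using assms by (simp add: field_simps)
qed

lemma weighted_sqnorm_le_diff_const:
  assumes "\<And>x. w x \<ge> 0" and "(\<Sum>x\<in>UNIV. w x * g x) = 0"
  shows "weighted_sqnorm w g \<le> weighted_sqnorm w (\<lambda>x. g x - m)"
proof -
  have "weighted_sqnorm w (\<lambda>x. g x - m)
      = weighted_sqnorm w g - 2 * m * (\<Sum>x\<in>UNIV. w x * g x) + m\<^sup>2 * (\<Sum>x\<in>UNIV. w x)"
    unfolding weighted_sqnorm_def
    by (simp add: power2_eq_square algebra_simps sum.distrib sum_subtractf sum_distrib_left)
  moreover have "(\<Sum>x\<in>UNIV. w x) \<ge> 0"
    using assms(1) by (rule sum_nonneg)
  ultimately show ?thesis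
    using assms(2) by simp
qed

lemma poincare_centred:
  fixes c :: "'v::finite \<Rightarrow> 'v \<Rightarrow> real" and alpha :: "'v \<Rightarrow> real"
  assumes alpha_pos: "\<And>x. alpha x > 0"
    and poincare: "\<And>u. (\<Sum>x\<in>UNIV. alpha x * u x) = 0 \<Longrightarrow>
                         G * weighted_sqnorm alpha u \<le> dirichlet_form c alpha u u"
  obtains m where "G * weighted_sqnorm alpha (\<lambda>x. g x - m) \<le> dirichlet_form c alpha g g"
proof -
  define m where "m = (\<Sum>x\<in>UNIV. alpha x * g x) / (\<Sum>x\<in>UNIV. alpha x)"
  have "(\<Sum>x\<in>UNIV. alpha x) > 0"
    by (rule sum_pos) (auto intro: alpha_pos)
  have "(\<Sum>x\<in>UNIV. alpha x * (g x - m)) = (\<Sum>x\<in>UNIV. alpha x * g x) - (\<Sum>x\<in>UNIV. alpha x) * m"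
    by (simp add: right_diff_distrib sum_subtractf sum_distrib_right)
  then have "(\<Sum>x\<in>UNIV. alpha x * (g x - m)) = 0"
    using \<open>(\<Sum>x\<in>UNIV. alpha x) > 0\<close> by (simp add: m_def)
  from poincare[OF this] show ?thesis
    using that[of m] by (simp add: dirichlet_form_diff_const)
qed

lemma poincare_shifted_weights:
  fixes c :: "'v::finite \<Rightarrow> 'v \<Rightarrow> real" and alpha w :: "'v \<Rightarrow> real"
  assumes poincare: "\<And>u. (\<Sum>x\<in>UNIV. alpha x * u x) = 0 \<Longrightarrow>
                          G * weighted_sqnorm alpha u \<le> dirichlet_form c alpha u u"
    and "G \<ge> 0" and c_nonneg: "\<And>x y. c x y \<ge> 0" and alpha_pos: "\<And>x. alpha x > 0"
    and "a > 0" and a_le: "\<And>x. a \<le> alpha x"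
    and w_ge: "\<And>x. alpha x \<le> w x" and w_le: "\<And>x. w x \<le> alpha x + t"
    and centred: "(\<Sum>x\<in>UNIV. w x * g x) = 0"
  shows "min 1 a * G * weighted_sqnorm w g \<le> (1 + t) * dirichlet_form c w g g"
proof -
  have "t \<ge> 0"
    using w_ge[of undefined] w_le[of undefined] by simp
  obtain m where "G * weighted_sqnorm alpha (\<lambda>x. g x - m) \<le> dirichlet_form c alpha g g"
    using poincare_centred[of alpha, OF alpha_pos poincare] by blast
  define u where "u = (\<lambda>x. g x - m)"
  then have "G * weighted_sqnorm alpha u \<le> dirichlet_form c alpha g g"
    using \<open>G * weighted_sqnorm alpha (\<lambda>x. g x - m) \<le> dirichlet_form c alpha g g\<close> by simp
  also have "\<dots> \<le> dirichlet_form c w g g"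
    using alpha_pos by (intro dirichlet_form_mono_weights c_nonneg w_ge less_imp_le)
  finally have energy: "G * weighted_sqnorm alpha u \<le> dirichlet_form c w g g" .
  have w_nonneg: "w x \<ge> 0" for x
    using alpha_pos[of x] w_ge[of x] by simp
  have "w x \<le> (1 + t / a) * alpha x" for x
  proof -
    have "a * t \<le> alpha x * t"
      using \<open>t \<ge> 0\<close> a_le[of x] by (rule mult_right_mono[rotated])
    then have "t \<le> t / a * alpha x"
      using \<open>a > 0\<close> by (simp add: field_simps)
    then show ?thesis
      using w_le[of x] by (simp add: algebra_simps)
  qed
  then have "weighted_sqnorm w u \<le> (1 + t / a) * weighted_sqnorm alpha u"
    unfolding weighted_sqnorm_def sum_distrib_left
    by (intro sum_mono) (simp add: mult_right_mono flip: mult.assoc)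
  with weighted_sqnorm_le_diff_const[OF w_nonneg centred, of m]
  have norm: "weighted_sqnorm w g \<le> (1 + t / a) * weighted_sqnorm alpha u"
    by (simp add: u_def)
  have "min 1 a * G * weighted_sqnorm w g \<le> min 1 a * G * ((1 + t / a) * weighted_sqnorm alpha u)"
    using norm \<open>G \<ge> 0\<close> \<open>a > 0\<close> by (intro mult_left_mono) auto
  also have "\<dots> = (min 1 a * (1 + t / a)) * (G * weighted_sqnorm alpha u)"
    by (simp add: mult_ac)
  also have "\<dots> \<le> (1 + t) * (G * weighted_sqnorm alpha u)"
    using min_one_mult_le[OF \<open>a > 0\<close> \<open>t \<ge> 0\<close>] \<open>G \<ge> 0\<close> alpha_pos
    by (intro mult_right_mono mult_nonneg_nonneg weighted_sqnorm_nonneg) (auto intro: less_imp_le)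
  also have "\<dots> \<le> (1 + t) * dirichlet_form c w g g"
    using energy \<open>t \<ge> 0\<close> by (intro mult_left_mono) auto
  finally show ?thesis .
qed

lemma sip_eigenvalue_ge_of_centred_fibres:
  fixes c :: "'v::finite \<Rightarrow> 'v \<Rightarrow> real" and alpha :: "'v \<Rightarrow> real"
  assumes sym: "\<And>x y. c x y = c y x" and c_nonneg: "\<And>x y. c x y \<ge> 0"
    and alpha_pos: "\<And>x. alpha x > 0"
    and poincare: "\<And>u. (\<Sum>x\<in>UNIV. alpha x * u x) = 0 \<Longrightarrow>
                         G * weighted_sqnorm alpha u \<le> dirichlet_form c alpha u u"
    and "G \<ge> 0" and "a > 0" and a_le: "\<And>x. a \<le> alpha x"
    and "eta0 \<in> Xi (Suc k)" and "f eta0 \<noteq> 0"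
    and eigen: "\<And>eta. eta \<in> Xi (Suc k) \<Longrightarrow> - sip_gen c alpha f eta = lam * f eta"
    and centred: "\<And>xi. xi \<in> Xi k \<Longrightarrow> sip_intertwiner alpha f xi = 0"
  shows "min 1 a * G \<le> lam"
proof -
  let ?N = "\<Sum>eta\<in>Xi (Suc k). sip_weight alpha eta * (f eta)\<^sup>2"
  let ?w = "\<lambda>xi x. alpha x + real (xi x)"
  let ?g = "\<lambda>xi x. f (add_particle xi x)"
  have fibre: "min 1 a * G * weighted_sqnorm (?w xi) (?g xi)
      \<le> (1 + real k) * dirichlet_form c (?w xi) (?g xi) (?g xi)" if "xi \<in> Xi k" for xi
    using Xi_le[OF that] centred[OF that]
    by (intro poincare_shifted_weights[OF poincare \<open>G \<ge> 0\<close> c_nonneg alpha_pos \<open>a > 0\<close> a_le])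
      (simp_all add: sip_intertwiner_def)
  have "min 1 a * G * (real (Suc k) * ?N)
      = (\<Sum>xi\<in>Xi k. sip_weight alpha xi * (min 1 a * G * weighted_sqnorm (?w xi) (?g xi)))"
    unfolding sip_sqnorm_identity by (simp add: sum_distrib_left mult_ac)
  also have "\<dots> \<le> (\<Sum>xi\<in>Xi k. sip_weight alpha xi * ((1 + real k) * dirichlet_form c (?w xi) (?g xi) (?g xi)))"
    using fibre sip_weight_pos[of alpha, OF alpha_pos]
    by (intro sum_mono mult_left_mono) (auto intro: less_imp_le)
  also have "\<dots> = real (Suc k) * (\<Sum>xi\<in>Xi k. sip_weight alpha xi * dirichlet_form c (?w xi) (?g xi) (?g xi))"
    by (simp add: sum_distrib_left mult_ac)
  also have "\<dots> = real (Suc k) * (lam * ?N)"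
    by (simp only: sip_eigenfunction_energy[of c, OF sym eigen])
  finally have "(min 1 a * G) * (real (Suc k) * ?N) \<le> lam * (real (Suc k) * ?N)"
    by (simp add: mult_ac)
  moreover have "real (Suc k) * ?N > 0"
    using sum_sip_weight_sq_pos[of alpha, OF alpha_pos] assms(8,9) by simp
  ultimately show ?thesis
    by (rule mult_right_le_imp_le)
qed

lemma sip_eigenvalue_ge:
  fixes c :: "'v::finite \<Rightarrow> 'v \<Rightarrow> real" and alpha :: "'v \<Rightarrow> real"
  assumes sym: "\<And>x y. c x y = c y x" and c_nonneg: "\<And>x y. c x y \<ge> 0"
    and alpha_pos: "\<And>x. alpha x > 0"
    and poincare: "\<And>u. (\<Sum>x\<in>UNIV. alpha x * u x) = 0 \<Longrightarrow>
                         G * weighted_sqnorm alpha u \<le> dirichlet_form c alpha u u"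
    and "G \<ge> 0" and "a > 0" and a_le: "\<And>x. a \<le> alpha x"
  shows "lam \<noteq> 0 \<Longrightarrow> sip_eigenvalue c alpha k lam \<Longrightarrow> min 1 a * G \<le> lam"
proof (induction k)
  case 0
  then show ?case
    using sip_eigenvalue_0 by blast
next
  case (Suc k)
  obtain f eta0 where "eta0 \<in> Xi (Suc k)" and "f eta0 \<noteq> 0"
    and eigen: "\<And>eta. eta \<in> Xi (Suc k) \<Longrightarrow> - sip_gen c alpha f eta = lam * f eta"
    using Suc.prems(2) unfolding sip_eigenvalue_def by blast
  show ?case
  proof (cases "\<exists>xi\<in>Xi k. sip_intertwiner alpha f xi \<noteq> 0")
    case True
    then have "sip_eigenvalue c alpha k lam"
      unfolding sip_eigenvalue_def
      using sip_intertwiner_eigenfunction[of c, OF sym eigen] by blast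
    then show ?thesis
      using Suc.IH Suc.prems(1) by blast
  next
    case False
    then show ?thesis
      using sip_eigenvalue_ge_of_centred_fibres[of c alpha, OF sym c_nonneg alpha_pos poincare \<open>G \<ge> 0\<close>
          \<open>a > 0\<close> a_le \<open>eta0 \<in> Xi (Suc k)\<close> \<open>f eta0 \<noteq> 0\<close> eigen] by blast
  qed
qed

section \<open>Spectral gaps\<close>

lemma nonzero_sip_eigenvalues_Suc0_subset:
  fixes c :: "'v::finite \<Rightarrow> 'v \<Rightarrow> real"
  assumes sym: "\<And>x y. c x y = c y x" and "k \<ge> 1"
  shows "{lam. lam \<noteq> 0 \<and> sip_eigenvalue c alpha (Suc 0) lam}
           \<subseteq> {lam. lam \<noteq> 0 \<and> sip_eigenvalue c alpha k lam}"
proof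
  fix lam
  assume "lam \<in> {lam. lam \<noteq> 0 \<and> sip_eigenvalue c alpha (Suc 0) lam}"
  then show "lam \<in> {lam. lam \<noteq> 0 \<and> sip_eigenvalue c alpha k lam}"
    using rw_eigenvalue_imp_sip_eigenvalue[of c, OF sym sip_eigenvalue_Suc0_imp_rw_eigenvalue \<open>k \<ge> 1\<close>]
    by simp
qed

lemma nonzero_sip_eigenvalues_nonempty:
  fixes c :: "'v::finite \<Rightarrow> 'v \<Rightarrow> real" and alpha :: "'v \<Rightarrow> real"
  assumes card: "card (UNIV :: 'v set) \<ge> 2" and sym: "\<And>x y. c x y = c y x"
    and c_nonneg: "\<And>x y. c x y \<ge> 0" and conn: "connected_weights c"
    and alpha_pos: "\<And>x. alpha x > 0" and "k \<ge> 1"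
  shows "{lam. lam \<noteq> 0 \<and> sip_eigenvalue c alpha k lam} \<noteq> {}"
proof -
  obtain rho where "rho \<noteq> 0" and "rw_eigenvalue c alpha rho"
    using exists_rw_eigenvalue_poincare[of c alpha, OF card sym c_nonneg conn alpha_pos] by blast
  then show ?thesis
    using rw_eigenvalue_imp_sip_eigenvalue[of c, OF sym _ \<open>k \<ge> 1\<close>] by blast
qed

lemma gap_RW_poincare:
  fixes c :: "'v::finite \<Rightarrow> 'v \<Rightarrow> real" and alpha :: "'v \<Rightarrow> real"
  assumes card: "card (UNIV :: 'v set) \<ge> 2" and sym: "\<And>x y. c x y = c y x"
    and c_nonneg: "\<And>x y. c x y \<ge> 0" and conn: "connected_weights c"
    and alpha_pos: "\<And>x. alpha x > 0"
  shows "0 \<le> gap_RW c alpha"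
    and "\<And>u. (\<Sum>x\<in>UNIV. alpha x * u x) = 0 \<Longrightarrow>
           gap_RW c alpha * weighted_sqnorm alpha u \<le> dirichlet_form c alpha u u"
proof -
  let ?S = "{lam. lam \<noteq> 0 \<and> sip_eigenvalue c alpha (Suc 0) lam}"
  obtain rho where "rho \<noteq> 0" and "rw_eigenvalue c alpha rho"
    and rho_poincare: "\<And>u. (\<Sum>x\<in>UNIV. alpha x * u x) = 0 \<Longrightarrow>
                           rho * weighted_sqnorm alpha u \<le> dirichlet_form c alpha u u"
    using exists_rw_eigenvalue_poincare[of c alpha, OF card sym c_nonneg conn alpha_pos] by blast
  then have "rho \<in> ?S"
    using rw_eigenvalue_imp_sip_eigenvalue[of c, OF sym] by simp
  have S_nonneg: "lam \<ge> 0" if "lam \<in> ?S" for lam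
    using that sip_eigenvalue_nonneg[of c alpha, OF sym c_nonneg alpha_pos] by blast
  show "0 \<le> gap_RW c alpha"
    unfolding gap_RW_def gap_def using \<open>rho \<in> ?S\<close> S_nonneg by (intro cInf_greatest) auto
  have "gap_RW c alpha \<le> rho"
    unfolding gap_RW_def gap_def using \<open>rho \<in> ?S\<close> S_nonneg
    by (intro cInf_lower) (auto simp: bdd_below_def)
  show "gap_RW c alpha * weighted_sqnorm alpha u \<le> dirichlet_form c alpha u u"
    if "(\<Sum>x\<in>UNIV. alpha x * u x) = 0" for u
  proof -
    have "gap_RW c alpha * weighted_sqnorm alpha u \<le> rho * weighted_sqnorm alpha u"
      using \<open>gap_RW c alpha \<le> rho\<close> alpha_pos
      by (intro mult_right_mono weighted_sqnorm_nonneg) (simp_all add: less_imp_le)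
    also have "\<dots> \<le> dirichlet_form c alpha u u"
      by (rule rho_poincare[OF that])
    finally show ?thesis .
  qed
qed

lemma nonzero_sip_eigenvalue_ge:
  fixes c :: "'v::finite \<Rightarrow> 'v \<Rightarrow> real" and alpha :: "'v \<Rightarrow> real"
  assumes card: "card (UNIV :: 'v set) \<ge> 2" and sym: "\<And>x y. c x y = c y x"
    and c_nonneg: "\<And>x y. c x y \<ge> 0" and conn: "connected_weights c"
    and alpha_pos: "\<And>x. alpha x > 0"
    and "lam \<noteq> 0" and "sip_eigenvalue c alpha k lam"
  shows "min 1 (Min (range alpha)) * gap_RW c alpha \<le> lam"
proof (rule sip_eigenvalue_ge[of c alpha, OF sym c_nonneg alpha_pos])
  show "gap_RW c alpha * weighted_sqnorm alpha u \<le> dirichlet_form c alpha u u"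
    if "(\<Sum>x\<in>UNIV. alpha x * u x) = 0" for u
    using gap_RW_poincare(2)[of c alpha, OF card sym c_nonneg conn alpha_pos that] .
  show "0 \<le> gap_RW c alpha"
    using gap_RW_poincare(1)[of c alpha, OF card sym c_nonneg conn alpha_pos] .
  show "0 < Min (range alpha)"
    using Min_in[of "range alpha"] alpha_pos by auto
  show "Min (range alpha) \<le> alpha x" for x
    by simp
qed fact+

theorem theorem1p1:
  fixes c :: "'v::finite \<Rightarrow> 'v \<Rightarrow> real" and alpha :: "'v \<Rightarrow> real"
  assumes "card (UNIV :: 'v set) \<ge> 2"
    and "\<And>x y. c x y = c y x"
    and "\<And>x y. c x y \<ge> 0"
    and "connected_weights c"
    and "\<And>x. alpha x > 0"
  shows "min 1 (Min (range alpha)) * gap_RW c alpha \<le> gap_SIP c alpha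
         \<and> gap_SIP c alpha \<le> gap_RW c alpha"
proof -
  let ?S = "\<lambda>k. {lam. lam \<noteq> 0 \<and> sip_eigenvalue c alpha k lam}"
  let ?b = "min 1 (Min (range alpha)) * gap_RW c alpha"
  have S_nonempty: "?S k \<noteq> {}" if "k \<ge> 1" for k
    using nonzero_sip_eigenvalues_nonempty[of c alpha, OF assms that] .
  have b_le: "?b \<le> lam" if "lam \<in> ?S k" for k lam
    using that nonzero_sip_eigenvalue_ge[of c alpha, OF assms] by blast
  have lower: "?b \<le> gap c alpha k" if "k \<ge> 2" for k
    unfolding gap_def using S_nonempty[of k] that b_le by (intro cInf_greatest) auto
  have "gap_SIP c alpha \<le> gap c alpha 2"
    unfolding gap_SIP_def using lower by (intro cINF_lower) (auto simp: bdd_below_def)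
  also have "gap c alpha 2 \<le> gap c alpha 1"
    unfolding gap_def using S_nonempty[of 1] b_le nonzero_sip_eigenvalues_Suc0_subset[of c, OF assms(2)]
    by (intro cInf_superset_mono) (auto simp: bdd_below_def)
  finally show ?thesis
    using lower unfolding gap_SIP_def gap_RW_def by (auto intro: cINF_greatest)
qed

end
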